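(* In a phase space $Z_1$, the instantaneous perturbation propagation problem (the linearized Euler system with initial data $(v_x',v_y',v_z',p')(\cdot,0) = I \in Z_1$) is well posed on every interval of time $[0,t_0]$, and the null solution is stable with respect to the class $Z_1$ of initial perturbations.
   Context: Fix constants $U_0,c_0,\rho_0>0$. The linearized Euler system for $(v_x',v_y',v_z',p')$ depending on $(x,y,z,t)$ is: $\partial_t v_x' + U_0\partial_x v_x' + \frac1{\rho_0}\partial_x p' = 0$, $\partial_t v_y' + U_0\partial_x v_y' + \frac1{\rho_0}\partial_y p' = 0$, $\partial_t v_z' + U_0\partial_x v_z' + \frac1{\rho_0}\partial_z p' = 0$, $\partial_t p' + U_0\partial_xp' + \rho_0c_0^2(\partial_xv_x'+\partial_yv_y'+\partial_zv_z') = 0$. Phase space $Z_1$: fix real constants $k_i,l_i,m_i$ ($i=1,\dots,4$) with $k_1k_2k_3k_4\neq0$ and $\Delta = \frac{c_0\rho_0}{k_3k_4}\big[r_1(k_2k_3k_4+k_3m_2m_4+k_4l_2l_3) + r_2(k_1k_3k_4+k_3m_1m_4+k_4l_1l_3)\big]\neq0$, where $r_i=\sqrt{k_i^2+l_i^2+m_i^2}$. With $\xi_i=k_ix+l_iy+m_iz$, to each system $f=(f_1,\dots,f_4)$ of $C^1$ functions $\mathbb{R}\to\mathbb{R}$ associate $I_f=(F,G,H,P)$: $F = k_1f_1(\xi_1)+k_2f_2(\xi_2)+\frac{l_3}{k_3}f_3(\xi_3)+\frac{m_4}{k_4}f_4(\xi_4)$, $G = l_1f_1(\xi_1)+l_2f_2(\xi_2)-f_3(\xi_3)$,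 $H = m_1f_1(\xi_1)+m_2f_2(\xi_2)-f_4(\xi_4)$, $P = -c_0\rho_0r_1f_1(\xi_1)+c_0\rho_0r_2f_2(\xi_2)$. $Z_1$ is the set of all such $I_f$ with the usual algebraic operations and the topology of uniform convergence on $\mathbb{R}^3$ (neighbourhoods of the origin: sets containing some $V^\varepsilon=\{(F,G,H,P)\in Z_1: |F|,|G|,|H|,|P|<\varepsilon \text{ everywhere on }\mathbb{R}^3\}$). Well-posedness on $[0,t_0]$: (a) for every $I\in Z_1$ there is a unique solution of the system with initial value $I$ defined for $t\in[0,t_0]$, and (b) whenever $I_n\to I$ in $Z_1$, the solutions corresponding to $I_n$ converge in $Z_1$ to the solution corresponding to $I$ at every $t\in[0,t_0]$. Stability (Lyapunov) of the null solution with respect to $Z_1$: the problem is well posed on $[0,t_0]$ for every $t_0>0$, and for every neighbourhood $V^\varepsilon$ there is $\eta>0$ such that $I\in V^\eta$ implies that the solution lies in $V^\varepsilon$ for all $t\ge0$. *)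

theory Defs
  imports "HOL-Analysis.Analysis"
begin

text \<open>A spatial field R^3 -> R (curried in x y z) and a space-time field (x y z t).\<close>
type_synonym fld = "real \<Rightarrow> real \<Rightarrow> real \<Rightarrow> real"
type_synonym state = "fld \<times> fld \<times> fld \<times> fld"
type_synonym stfld = "real \<Rightarrow> real \<Rightarrow> real \<Rightarrow> real \<Rightarrow> real"
type_synonym sol = "stfld \<times> stfld \<times> stfld \<times> stfld"

definition C1_fun :: "(real \<Rightarrow> real) \<Rightarrow> bool" where
  "C1_fun f \<longleftrightarrow> (\<exists>f'. (\<forall>s. (f has_real_derivative f' s) (at s)) \<and> continuous_on UNIV f')"

definition rr :: "(nat \<Rightarrow> real) \<Rightarrow> (nat \<Rightarrow> real) \<Rightarrow> (nat \<Rightarrow> real) \<Rightarrow> nat \<Rightarrow> real" where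
  "rr k l m i = sqrt ((k i)^2 + (l i)^2 + (m i)^2)"

definition Delta :: "real \<Rightarrow> real \<Rightarrow> (nat \<Rightarrow> real) \<Rightarrow> (nat \<Rightarrow> real) \<Rightarrow> (nat \<Rightarrow> real) \<Rightarrow> real" where
  "Delta c0 rho0 k l m =
     c0 * rho0 / (k 3 * k 4) *
      (rr k l m 1 * (k 2 * k 3 * k 4 + k 3 * m 2 * m 4 + k 4 * l 2 * l 3)
     + rr k l m 2 * (k 1 * k 3 * k 4 + k 3 * m 1 * m 4 + k 4 * l 1 * l 3))"

definition If :: "real \<Rightarrow> real \<Rightarrow> (nat \<Rightarrow> real) \<Rightarrow> (nat \<Rightarrow> real) \<Rightarrow> (nat \<Rightarrow> real)
                   \<Rightarrow> (nat \<Rightarrow> real \<Rightarrow> real) \<Rightarrow> state" where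
  "If c0 rho0 k l m f =
    (let \<xi> = (\<lambda>i x y z. k i * x + l i * y + m i * z) in
     ((\<lambda>x y z. k 1 * f 1 (\<xi> 1 x y z) + k 2 * f 2 (\<xi> 2 x y z)
              + l 3 / k 3 * f 3 (\<xi> 3 x y z) + m 4 / k 4 * f 4 (\<xi> 4 x y z)),
      (\<lambda>x y z. l 1 * f 1 (\<xi> 1 x y z) + l 2 * f 2 (\<xi> 2 x y z) - f 3 (\<xi> 3 x y z)),
      (\<lambda>x y z. m 1 * f 1 (\<xi> 1 x y z) + m 2 * f 2 (\<xi> 2 x y z) - f 4 (\<xi> 4 x y z)),
      (\<lambda>x y z. - c0 * rho0 * rr k l m 1 * f 1 (\<xi> 1 x y z)
              + c0 * rho0 * rr k l m 2 * f 2 (\<xi> 2 x y z))))"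

definition Z1 :: "real \<Rightarrow> real \<Rightarrow> (nat \<Rightarrow> real) \<Rightarrow> (nat \<Rightarrow> real) \<Rightarrow> (nat \<Rightarrow> real) \<Rightarrow> state set" where
  "Z1 c0 rho0 k l m = {If c0 rho0 k l m f | f. \<forall>i\<in>{1..4::nat}. C1_fun (f i)}"

definition Veps :: "real \<Rightarrow> real \<Rightarrow> (nat \<Rightarrow> real) \<Rightarrow> (nat \<Rightarrow> real) \<Rightarrow> (nat \<Rightarrow> real)
                    \<Rightarrow> real \<Rightarrow> state set" where
  "Veps c0 rho0 k l m \<epsilon> = {(F, G, H, P) \<in> Z1 c0 rho0 k l m.
       \<forall>x y z. \<bar>F x y z\<bar> < \<epsilon> \<and> \<bar>G x y z\<bar> < \<epsilon> \<and> \<bar>H x y z\<bar> < \<epsilon> \<and> \<bar>P x y z\<bar> < \<epsilon>}"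

definition conv_Z1 :: "(nat \<Rightarrow> state) \<Rightarrow> state \<Rightarrow> bool" where
  "conv_Z1 X L \<longleftrightarrow> (\<forall>\<epsilon>>0. eventually (\<lambda>n. \<forall>x y z.
       \<bar>fst (X n) x y z - fst L x y z\<bar> < \<epsilon> \<and>
       \<bar>fst (snd (X n)) x y z - fst (snd L) x y z\<bar> < \<epsilon> \<and>
       \<bar>fst (snd (snd (X n))) x y z - fst (snd (snd L)) x y z\<bar> < \<epsilon> \<and>
       \<bar>snd (snd (snd (X n))) x y z - snd (snd (snd L)) x y z\<bar> < \<epsilon>) sequentially)"

definition slice :: "sol \<Rightarrow> real \<Rightarrow> state" where
  "slice u t = (case u of (vx, vy, vz, p) \<Rightarrow>
      ((\<lambda>x y z. vx x y z t), (\<lambda>x y z. vy x y z t), (\<lambda>x y z. vz x y z t), (\<lambda>x y z. p x y z t)))"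

definition C1_pderivs :: "real \<Rightarrow> stfld \<Rightarrow> stfld \<Rightarrow> stfld \<Rightarrow> stfld \<Rightarrow> stfld \<Rightarrow> bool" where
  "C1_pderivs t0 w wx wy wz wt \<longleftrightarrow>
    (\<forall>x y z t. t \<in> {0..t0} \<longrightarrow>
       ((\<lambda>s. w s y z t) has_real_derivative wx x y z t) (at x) \<and>
       ((\<lambda>s. w x s z t) has_real_derivative wy x y z t) (at y) \<and>
       ((\<lambda>s. w x y s t) has_real_derivative wz x y z t) (at z) \<and>
       ((\<lambda>s. w x y z s) has_real_derivative wt x y z t) (at t within {0..t0})) \<and>
    (\<forall>g \<in> {w, wx, wy, wz, wt}.
       continuous_on (UNIV \<times> UNIV \<times> UNIV \<times> {0..t0}) (\<lambda>(x, y, z, t). g x y z t))"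

definition is_solution :: "real \<Rightarrow> real \<Rightarrow> real \<Rightarrow> real \<Rightarrow> state \<Rightarrow> sol \<Rightarrow> bool" where
  "is_solution U0 c0 rho0 t0 I u \<longleftrightarrow>
    (case u of (vx, vy, vz, p) \<Rightarrow>
      (\<exists>vxx vxy vxz vxt vyx vyy vyz vyt vzx vzy vzz vzt px py pz pt.
         C1_pderivs t0 vx vxx vxy vxz vxt \<and>
         C1_pderivs t0 vy vyx vyy vyz vyt \<and>
         C1_pderivs t0 vz vzx vzy vzz vzt \<and>
         C1_pderivs t0 p px py pz pt \<and>
         (\<forall>x y z t. t \<in> {0..t0} \<longrightarrow>
            vxt x y z t + U0 * vxx x y z t + 1 / rho0 * px x y z t = 0 \<and>
            vyt x y z t + U0 * vyx x y z t + 1 / rho0 * py x y z t = 0 \<and>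
            vzt x y z t + U0 * vzx x y z t + 1 / rho0 * pz x y z t = 0 \<and>
            pt x y z t + U0 * px x y z t
              + rho0 * c0^2 * (vxx x y z t + vyy x y z t + vzz x y z t) = 0)) \<and>
      slice u 0 = I)"

definition Z1_solution :: "real \<Rightarrow> real \<Rightarrow> real \<Rightarrow> (nat \<Rightarrow> real) \<Rightarrow> (nat \<Rightarrow> real) \<Rightarrow> (nat \<Rightarrow> real)
                           \<Rightarrow> real \<Rightarrow> state \<Rightarrow> sol \<Rightarrow> bool" where
  "Z1_solution U0 c0 rho0 k l m t0 I u \<longleftrightarrow>
     is_solution U0 c0 rho0 t0 I u \<and> (\<forall>t\<in>{0..t0}. slice u t \<in> Z1 c0 rho0 k l m)"

definition well_posed :: "real \<Rightarrow> real \<Rightarrow> real \<Rightarrow> (nat \<Rightarrow> real) \<Rightarrow> (nat \<Rightarrow> real) \<Rightarrow> (nat \<Rightarrow> real)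
                          \<Rightarrow> real \<Rightarrow> bool" where
  "well_posed U0 c0 rho0 k l m t0 \<longleftrightarrow>
    (\<forall>I \<in> Z1 c0 rho0 k l m.
       (\<exists>u. Z1_solution U0 c0 rho0 k l m t0 I u) \<and>
       (\<forall>u v. Z1_solution U0 c0 rho0 k l m t0 I u \<longrightarrow> Z1_solution U0 c0 rho0 k l m t0 I v \<longrightarrow>
              (\<forall>t\<in>{0..t0}. slice u t = slice v t))) \<and>
    (\<forall>I Is u us. I \<in> Z1 c0 rho0 k l m \<longrightarrow> (\<forall>n. Is n \<in> Z1 c0 rho0 k l m) \<longrightarrow> conv_Z1 Is I \<longrightarrow>
       Z1_solution U0 c0 rho0 k l m t0 I u \<longrightarrow>
       (\<forall>n. Z1_solution U0 c0 rho0 k l m t0 (Is n) (us n)) \<longrightarrow>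
       (\<forall>t\<in>{0..t0}. conv_Z1 (\<lambda>n. slice (us n) t) (slice u t)))"

definition lyapunov_stable :: "real \<Rightarrow> real \<Rightarrow> real \<Rightarrow> (nat \<Rightarrow> real) \<Rightarrow> (nat \<Rightarrow> real) \<Rightarrow> (nat \<Rightarrow> real) \<Rightarrow> bool" where
  "lyapunov_stable U0 c0 rho0 k l m \<longleftrightarrow>
    (\<forall>t0>0. well_posed U0 c0 rho0 k l m t0) \<and>
    (\<forall>\<epsilon>>0. \<exists>\<eta>>0. \<forall>I \<in> Veps c0 rho0 k l m \<eta>.
       \<forall>t0>0. \<forall>u. Z1_solution U0 c0 rho0 k l m t0 I u \<longrightarrow>
          (\<forall>t\<in>{0..t0}. slice u t \<in> Veps c0 rho0 k l m \<epsilon>))"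

end

theory Submission
  imports Defs
begin

text \<open>Every element of Z_1 is a superposition of four plane waves: two acoustic modes and two
  vortical ones. Since Delta \<noteq> 0, the linear map from the four mode amplitudes to (v_x, v_y, v_z, p)
  is invertible, so a state determines its amplitudes pointwise. Along a solution whose time
  slices stay in Z_1, each amplitude is a plane wave at every time, hence its y- and z-derivatives
  are fixed multiples of its x-derivative; inverting the mode map then splits the Euler system
  into four scalar transport equations along x. The solution is therefore the superposition of
  the initial amplitudes translated by (speed j) t, which gives existence and uniqueness.
  Translation preserves uniform bounds and the mode map and its inverse are fixed linear maps,
  so uniform closeness of initial data is propagated uniformly in time: this is continuous
  dependence, and, as the null state is stationary, Lyapunov stability.\<close>

section \<open>Transport equations and C^1 fields\<close>

lemma transport_solution_shift:
  fixes \<phi> \<phi>x \<phi>t :: "real \<Rightarrow> real \<Rightarrow> real"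
  assumes dx: "\<And>x t. t \<in> {0..T} \<Longrightarrow> ((\<lambda>s. \<phi> s t) has_real_derivative \<phi>x x t) (at x)"
    and dt: "\<And>x t. t \<in> {0..T} \<Longrightarrow> ((\<lambda>s. \<phi> x s) has_real_derivative \<phi>t x t) (at t within {0..T})"
    and cont: "continuous_on ({0..T} \<times> UNIV) (\<lambda>(t, x). \<phi>x x t)"
    and transport: "\<And>x t. t \<in> {0..T} \<Longrightarrow> \<phi>t x t = - v * \<phi>x x t"
    and t: "t \<in> {0..T}"
  shows "\<phi> (x + v * t) t = \<phi> x 0"
proof -
  \<comment> \<open>Continuity of the x-derivative makes \<phi> jointly differentiable, so the chain rule applies
    along the characteristic s \<mapsto> (s, x + v s).\<close>
  have joint: "((\<lambda>(s, y). \<phi> y s) has_derivative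
      (\<lambda>(ds, dy). \<phi>t (snd p) (fst p) * ds + blinfun_mult_left (\<phi>x (snd p) (fst p)) dy))
      (at p within {0..T} \<times> UNIV)" if "p \<in> {0..T} \<times> UNIV" for p
  proof -
    obtain s y where p: "p = (s, y)"
      by (cases p)
    with that have s: "s \<in> {0..T}"
      by auto
    have "((\<lambda>(s, y). \<phi> y s) has_derivative
        (\<lambda>(ds, dy). \<phi>t y s * ds + blinfun_mult_left (\<phi>x y s) dy)) (at (s, y) within {0..T} \<times> UNIV)"
    proof (rule has_derivative_partialsI[where f = "\<lambda>s y. \<phi> y s" and fx = "(*) (\<phi>t y s)"])
      show "((\<lambda>s'. \<phi> y s') has_derivative (*) (\<phi>t y s)) (at s within {0..T})"
        using dt[OF s] by (simp add: has_field_derivative_def)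
      show "((\<lambda>y'. \<phi> y' s') has_derivative blinfun_apply (blinfun_mult_left (\<phi>x y' s')))
          (at y' within UNIV)" if "s' \<in> {0..T}" for s' y'
        using dx[OF that, of y'] unfolding has_field_derivative_def
        by (rule has_derivative_eq_rhs) (auto simp: mult.commute)
      have "continuous_on ({0..T} \<times> UNIV) (\<lambda>p. blinfun_mult_left ((\<lambda>(t, x). \<phi>x x t) p))"
        by (rule bounded_linear.continuous_on[OF bounded_linear_blinfun_mult_left cont])
      then show "continuous (at (s, y) within {0..T} \<times> UNIV) (\<lambda>(s', y'). blinfun_mult_left (\<phi>x y' s'))"
        using s by (simp add: continuous_on_eq_continuous_within split_beta')
    qed (use s in auto)
    then show ?thesis
      by (simp add: p)
  qed
  define h where "h s = \<phi> (x + v * s) s" for s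
  have "(h has_derivative (\<lambda>_. 0)) (at s within {0..T})" if s: "s \<in> {0..T}" for s
  proof -
    have "((\<lambda>s. (s, x + v * s)) has_derivative (\<lambda>ds. (ds, v * ds))) (at s within {0..T})"
      by (auto intro!: derivative_eq_intros)
    from has_derivative_in_compose2[where g = "\<lambda>(s, y). \<phi> y s", OF joint _ s this]
    have "(h has_derivative (\<lambda>ds. \<phi>t (x + v * s) s * ds + \<phi>x (x + v * s) s * (v * ds)))
        (at s within {0..T})"
      unfolding h_def by (force simp: mult.commute)
    then show ?thesis
      using transport[OF s] by (simp add: algebra_simps)
  qed
  then obtain c where "\<forall>s\<in>{0..T}. h s = c"
    using has_derivative_zero_constant[of "{0..T}" h] by auto
  then have "h t = h 0"
    using t by auto
  then show ?thesis
    by (simp add: h_def)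
qed

lemma C1_pderivsD:
  assumes "C1_pderivs T w wx wy wz wt" and "t \<in> {0..T}"
  shows "((\<lambda>s. w s y z t) has_real_derivative wx x y z t) (at x)"
    and "((\<lambda>s. w x s z t) has_real_derivative wy x y z t) (at y)"
    and "((\<lambda>s. w x y s t) has_real_derivative wz x y z t) (at z)"
    and "((\<lambda>s. w x y z s) has_real_derivative wt x y z t) (at t within {0..T})"
  using assms unfolding C1_pderivs_def by blast+

lemma C1_pderivs_transport_shift:
  assumes C1: "C1_pderivs T w wx wy wz wt"
    and transport: "\<And>x y z t. t \<in> {0..T} \<Longrightarrow> wt x y z t = - v * wx x y z t"
    and t: "t \<in> {0..T}"
  shows "w x y z t = w (x - v * t) y z 0"
proof -
  have "continuous_on (UNIV \<times> UNIV \<times> UNIV \<times> {0..T}) (\<lambda>(x, y, z, t). wx x y z t)"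
    using C1 by (simp add: C1_pderivs_def)
  moreover have "continuous_on ({0..T} \<times> UNIV) (\<lambda>(t :: real, x :: real). (x, y, z, t))"
    by (auto intro!: continuous_intros simp: split_beta')
  ultimately have "continuous_on ({0..T} \<times> UNIV) ((\<lambda>(x, y, z, t). wx x y z t) \<circ> (\<lambda>(t, x). (x, y, z, t)))"
    by (intro continuous_on_compose) (auto elim: continuous_on_subset)
  then have "continuous_on ({0..T} \<times> UNIV) (\<lambda>(t, x). wx x y z t)"
    by (simp add: o_def split_beta')
  with C1 transport t
  have "w ((x - v * t) + v * t) y z t = w (x - v * t) y z 0"
    by (intro transport_solution_shift[where \<phi> = "\<lambda>x t. w x y z t" and \<phi>x = "\<lambda>x t. wx x y z t"
          and \<phi>t = "\<lambda>x t. wt x y z t" and T = T]) (auto simp: C1_pderivs_def)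
  then show ?thesis by simp
qed

lemma C1_pderivs_add:
  assumes "C1_pderivs T v vx vy vz vt" and "C1_pderivs T w wx wy wz wt"
  shows "C1_pderivs T (\<lambda>x y z t. v x y z t + w x y z t)
    (\<lambda>x y z t. vx x y z t + wx x y z t) (\<lambda>x y z t. vy x y z t + wy x y z t)
    (\<lambda>x y z t. vz x y z t + wz x y z t) (\<lambda>x y z t. vt x y z t + wt x y z t)"
  using assms unfolding C1_pderivs_def
  by (auto intro!: derivative_intros C1_pderivsD[OF assms(1)] C1_pderivsD[OF assms(2)]
      continuous_on_add simp: split_beta')

lemma C1_pderivs_diff:
  assumes "C1_pderivs T v vx vy vz vt" and "C1_pderivs T w wx wy wz wt"
  shows "C1_pderivs T (\<lambda>x y z t. v x y z t - w x y z t)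
    (\<lambda>x y z t. vx x y z t - wx x y z t) (\<lambda>x y z t. vy x y z t - wy x y z t)
    (\<lambda>x y z t. vz x y z t - wz x y z t) (\<lambda>x y z t. vt x y z t - wt x y z t)"
  using assms unfolding C1_pderivs_def
  by (auto intro!: derivative_intros C1_pderivsD[OF assms(1)] C1_pderivsD[OF assms(2)]
      continuous_on_diff simp: split_beta')

lemma C1_pderivs_cmult:
  assumes "C1_pderivs T w wx wy wz wt"
  shows "C1_pderivs T (\<lambda>x y z t. a * w x y z t)
    (\<lambda>x y z t. a * wx x y z t) (\<lambda>x y z t. a * wy x y z t)
    (\<lambda>x y z t. a * wz x y z t) (\<lambda>x y z t. a * wt x y z t)"
  using assms unfolding C1_pderivs_def
  by (auto intro!: DERIV_cmult C1_pderivsD[OF assms] continuous_on_mult_left simp: split_beta')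

lemma C1_pderivs_plane_wave:
  assumes g: "\<And>s. (g has_real_derivative g' s) (at s)" and g': "continuous_on UNIV g'"
  shows "C1_pderivs T (\<lambda>x y z t. g (a * x + b * y + c * z - \<omega> * t))
    (\<lambda>x y z t. a * g' (a * x + b * y + c * z - \<omega> * t))
    (\<lambda>x y z t. b * g' (a * x + b * y + c * z - \<omega> * t))
    (\<lambda>x y z t. c * g' (a * x + b * y + c * z - \<omega> * t))
    (\<lambda>x y z t. - \<omega> * g' (a * x + b * y + c * z - \<omega> * t))"
proof -
  have cont: "continuous_on S (\<lambda>(x, y, z, t). e * h (a * x + b * y + c * z - \<omega> * t))"
    if "continuous_on UNIV h" for h :: "real \<Rightarrow> real" and e S
  proof -
    have "continuous_on S (\<lambda>p. h ((\<lambda>(x, y, z, t). a * x + b * y + c * z - \<omega> * t) p))"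
      by (rule continuous_on_compose2[OF that]) (auto intro!: continuous_intros simp: split_beta')
    then show ?thesis
      unfolding split_beta' by (rule continuous_on_mult_left)
  qed
  have "continuous_on UNIV g"
    using g by (meson DERIV_isCont continuous_at_imp_continuous_on)
  have chain: "((\<lambda>s. g (h s)) has_real_derivative g' (h s) * h') (at s)"
    if "(h has_real_derivative h') (at s)" for h h' s
    using DERIV_chain2[OF g that] .
  show ?thesis
    unfolding C1_pderivs_def
  proof (intro conjI allI impI ballI)
    fix x y z t :: real
    show "((\<lambda>s. g (a * s + b * y + c * z - \<omega> * t)) has_real_derivative
        a * g' (a * x + b * y + c * z - \<omega> * t)) (at x)"
      by (rule chain[THEN DERIV_cong]) (auto intro!: derivative_eq_intros)
    show "((\<lambda>s. g (a * x + b * s + c * z - \<omega> * t)) has_real_derivative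
        b * g' (a * x + b * y + c * z - \<omega> * t)) (at y)"
      by (rule chain[THEN DERIV_cong]) (auto intro!: derivative_eq_intros)
    show "((\<lambda>s. g (a * x + b * y + c * s - \<omega> * t)) has_real_derivative
        c * g' (a * x + b * y + c * z - \<omega> * t)) (at z)"
      by (rule chain[THEN DERIV_cong]) (auto intro!: derivative_eq_intros)
    have "((\<lambda>s. g (a * x + b * y + c * z - \<omega> * s)) has_real_derivative
        - \<omega> * g' (a * x + b * y + c * z - \<omega> * t)) (at t)"
      by (rule chain[THEN DERIV_cong]) (auto intro!: derivative_eq_intros)
    then show "((\<lambda>s. g (a * x + b * y + c * z - \<omega> * s)) has_real_derivative
        - \<omega> * g' (a * x + b * y + c * z - \<omega> * t)) (at t within {0..T})"
      by (rule has_field_derivative_at_within)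
  qed (use cont[OF \<open>continuous_on UNIV g\<close>, where e = 1] cont[OF g'] cont[OF g', where e = "- \<omega>"] in auto)
qed

lemma plane_wave_pderivs:
  assumes g: "(g has_real_derivative g') (at (a * x + b * y + c * z))"
    and "((\<lambda>s. g (a * s + b * y + c * z)) has_real_derivative gx) (at x)"
    and "((\<lambda>s. g (a * x + b * s + c * z)) has_real_derivative gy) (at y)"
    and "((\<lambda>s. g (a * x + b * y + c * s)) has_real_derivative gz) (at z)"
  shows "gx = g' * a" and "gy = g' * b" and "gz = g' * c"
proof -
  have "((\<lambda>s. g (a * s + b * y + c * z)) has_real_derivative g' * a) (at x)"
    by (rule DERIV_chain2[where g = "\<lambda>s. a * s + b * y + c * z", OF g])
      (auto intro!: derivative_eq_intros)
  moreover have "((\<lambda>s. g (a * x + b * s + c * z)) has_real_derivative g' * b) (at y)"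
    by (rule DERIV_chain2[where g = "\<lambda>s. a * x + b * s + c * z", OF g])
      (auto intro!: derivative_eq_intros)
  moreover have "((\<lambda>s. g (a * x + b * y + c * s)) has_real_derivative g' * c) (at z)"
    by (rule DERIV_chain2[where g = "\<lambda>s. a * x + b * y + c * s", OF g])
      (auto intro!: derivative_eq_intros)
  ultimately show "gx = g' * a" and "gy = g' * b" and "gz = g' * c"
    using assms(2-4) by (auto dest: DERIV_unique)
qed

lemma C1_fun_shift:
  assumes "C1_fun f"
  shows "C1_fun (\<lambda>s. f (s - d))"
proof -
  obtain f' where f: "\<And>s. (f has_real_derivative f' s) (at s)" and f': "continuous_on UNIV f'"
    using assms unfolding C1_fun_def by blast
  have "((\<lambda>s. f (s - d)) has_real_derivative f' (s - d)) (at s)" for s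
    by (rule DERIV_chain2[OF f, THEN DERIV_cong]) (auto intro!: derivative_eq_intros)
  moreover have "continuous_on UNIV (\<lambda>s. f' (s - d))"
    by (rule continuous_on_compose2[OF f']) (auto intro!: continuous_intros)
  ultimately show ?thesis
    unfolding C1_fun_def by (intro exI[of _ "\<lambda>s. f' (s - d)"]) simp
qed

lemma abs_lincomb4_diff_le:
  fixes e :: real
  assumes "\<bar>x1 - y1\<bar> \<le> e" "\<bar>x2 - y2\<bar> \<le> e" "\<bar>x3 - y3\<bar> \<le> e" "\<bar>x4 - y4\<bar> \<le> e"
    and "\<bar>a1\<bar> + \<bar>a2\<bar> + \<bar>a3\<bar> + \<bar>a4\<bar> \<le> C"
  shows "\<bar>(a1 * x1 + a2 * x2 + a3 * x3 + a4 * x4) - (a1 * y1 + a2 * y2 + a3 * y3 + a4 * y4)\<bar> \<le> C * e"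
proof -
  have "\<bar>(a1 * x1 + a2 * x2 + a3 * x3 + a4 * x4) - (a1 * y1 + a2 * y2 + a3 * y3 + a4 * y4)\<bar>
      \<le> \<bar>a1\<bar> * \<bar>x1 - y1\<bar> + \<bar>a2\<bar> * \<bar>x2 - y2\<bar> + \<bar>a3\<bar> * \<bar>x3 - y3\<bar> + \<bar>a4\<bar> * \<bar>x4 - y4\<bar>"
    unfolding abs_mult[symmetric] by (simp add: algebra_simps)
  also have "\<dots> \<le> (\<bar>a1\<bar> + \<bar>a2\<bar> + \<bar>a3\<bar> + \<bar>a4\<bar>) * e"
    using assms(1-4) by (simp add: distrib_right add_mono mult_left_mono)
  also have "\<dots> \<le> C * e"
    using assms by (intro mult_right_mono) auto
  finally show ?thesis .
qed

section \<open>Uniform closeness of states\<close>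

definition uniformly_close :: "real \<Rightarrow> state \<Rightarrow> state \<Rightarrow> bool" where
  "uniformly_close e A B \<longleftrightarrow> (\<forall>x y z.
     \<bar>fst A x y z - fst B x y z\<bar> \<le> e \<and> \<bar>fst (snd A) x y z - fst (snd B) x y z\<bar> \<le> e \<and>
     \<bar>fst (snd (snd A)) x y z - fst (snd (snd B)) x y z\<bar> \<le> e \<and>
     \<bar>snd (snd (snd A)) x y z - snd (snd (snd B)) x y z\<bar> \<le> e)"

definition null_state :: state where
  "null_state = ((\<lambda>x y z. 0), (\<lambda>x y z. 0), (\<lambda>x y z. 0), (\<lambda>x y z. 0))"

lemma conv_Z1_iff_uniformly_close:
  "conv_Z1 X L \<longleftrightarrow> (\<forall>e>0. eventually (\<lambda>n. uniformly_close e (X n) L) sequentially)"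
proof
  assume conv: "conv_Z1 X L"
  have "eventually (\<lambda>n. uniformly_close e (X n) L) sequentially" if "e > 0" for e :: real
    using conv[unfolded conv_Z1_def, rule_format, OF that] unfolding uniformly_close_def
    by (rule eventually_mono) (meson less_imp_le)
  then show "\<forall>e>0. eventually (\<lambda>n. uniformly_close e (X n) L) sequentially"
    by blast
next
  assume close: "\<forall>e>0. eventually (\<lambda>n. uniformly_close e (X n) L) sequentially"
  show "conv_Z1 X L"
    unfolding conv_Z1_def
  proof (intro allI impI)
    fix e :: real
    assume "e > 0"
    then have "e / 2 > 0" and "e / 2 < e"
      by simp_all
    show "\<forall>\<^sub>F n in sequentially. \<forall>x y z.
       \<bar>fst (X n) x y z - fst L x y z\<bar> < e \<and> \<bar>fst (snd (X n)) x y z - fst (snd L) x y z\<bar> < e \<and>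
       \<bar>fst (snd (snd (X n))) x y z - fst (snd (snd L)) x y z\<bar> < e \<and>
       \<bar>snd (snd (snd (X n))) x y z - snd (snd (snd L)) x y z\<bar> < e"
      using close[rule_format, OF \<open>e / 2 > 0\<close>] unfolding uniformly_close_def
      by (rule eventually_mono) (use \<open>e / 2 < e\<close> in \<open>meson le_less_trans\<close>)
  qed
qed

lemma uniformly_close_mono: "uniformly_close e A B \<Longrightarrow> e \<le> e' \<Longrightarrow> uniformly_close e' A B"
  unfolding uniformly_close_def by (meson order_trans)

lemma Veps_imp_uniformly_close_null:
  "I \<in> Veps c0 rho0 k l m e \<Longrightarrow> uniformly_close e I null_state"
  by (auto simp: Veps_def uniformly_close_def null_state_def less_imp_le)

lemma uniformly_close_null_imp_Veps:
  assumes "I \<in> Z1 c0 rho0 k l m" and "uniformly_close e I null_state" and "e < \<epsilon>"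
  shows "I \<in> Veps c0 rho0 k l m \<epsilon>"
proof -
  obtain F G H P where I: "I = (F, G, H, P)"
    by (cases I)
  have "\<forall>x y z. \<bar>F x y z\<bar> \<le> e \<and> \<bar>G x y z\<bar> \<le> e \<and> \<bar>H x y z\<bar> \<le> e \<and> \<bar>P x y z\<bar> \<le> e"
    using assms(2) by (simp add: I uniformly_close_def null_state_def)
  then have "\<bar>F x y z\<bar> < \<epsilon> \<and> \<bar>G x y z\<bar> < \<epsilon> \<and> \<bar>H x y z\<bar> < \<epsilon> \<and> \<bar>P x y z\<bar> < \<epsilon>" for x y z
    using assms(3) by (meson le_less_trans)
  with assms(1) show ?thesis
    by (simp add: Veps_def I)
qed

section \<open>Plane-wave modes of the linearized Euler system\<close>

locale linearized_euler =
  fixes U0 c0 rho0 :: real and k l m :: "nat \<Rightarrow> real"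
  assumes k_nonzero: "\<forall>i\<in>{1..4::nat}. k i \<noteq> 0"
    and Delta_nonzero: "Delta c0 rho0 k l m \<noteq> 0"
begin

abbreviation r :: "nat \<Rightarrow> real" where
  "r \<equiv> rr k l m"

text \<open>With V j = f j (\<xi> j), the four mode maps give the components of I_f. Modes 1 and 2 are
  acoustic waves, modes 3 and 4 pressureless vortical waves.\<close>

definition mode_vx :: "(nat \<Rightarrow> real) \<Rightarrow> real" where
  "mode_vx V = k 1 * V 1 + k 2 * V 2 + l 3 / k 3 * V 3 + m 4 / k 4 * V 4"

definition mode_vy :: "(nat \<Rightarrow> real) \<Rightarrow> real" where
  "mode_vy V = l 1 * V 1 + l 2 * V 2 - V 3"

definition mode_vz :: "(nat \<Rightarrow> real) \<Rightarrow> real" where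
  "mode_vz V = m 1 * V 1 + m 2 * V 2 - V 4"

definition mode_p :: "(nat \<Rightarrow> real) \<Rightarrow> real" where
  "mode_p V = - c0 * rho0 * r 1 * V 1 + c0 * rho0 * r 2 * V 2"

definition speed :: "nat \<Rightarrow> real" where
  "speed j = (if j = 1 then U0 - c0 * r 1 / k 1 else if j = 2 then U0 + c0 * r 2 / k 2 else U0)"

definition acoustic_weight :: "nat \<Rightarrow> real" where
  "acoustic_weight i = k i + l 3 / k 3 * l i + m 4 / k 4 * m i"

definition acoustic_det :: real where
  "acoustic_det = acoustic_weight 1 * r 2 + acoustic_weight 2 * r 1"

text \<open>The inverse of the mode maps: vortex_free cancels the vortical modes, which together with
  the pressure leaves a 2 \<times> 2 system for the acoustic amplitudes, of determinant
  acoustic_det = Delta / (c0 rho0).\<close>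

definition vortex_free :: "real \<Rightarrow> real \<Rightarrow> real \<Rightarrow> real" where
  "vortex_free F G H = F + l 3 / k 3 * G + m 4 / k 4 * H"

definition acoustic_amp1 :: "real \<Rightarrow> real \<Rightarrow> real \<Rightarrow> real \<Rightarrow> real" where
  "acoustic_amp1 F G H P =
     (r 2 * vortex_free F G H - acoustic_weight 2 * (P / (c0 * rho0))) / acoustic_det"

definition acoustic_amp2 :: "real \<Rightarrow> real \<Rightarrow> real \<Rightarrow> real \<Rightarrow> real" where
  "acoustic_amp2 F G H P =
     (r 1 * vortex_free F G H + acoustic_weight 1 * (P / (c0 * rho0))) / acoustic_det"

definition amplitude :: "nat \<Rightarrow> real \<Rightarrow> real \<Rightarrow> real \<Rightarrow> real \<Rightarrow> real" where
  "amplitude j F G H P =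
    (if j = 1 then acoustic_amp1 F G H P
     else if j = 2 then acoustic_amp2 F G H P
     else if j = 3 then l 1 * acoustic_amp1 F G H P + l 2 * acoustic_amp2 F G H P - G
     else m 1 * acoustic_amp1 F G H P + m 2 * acoustic_amp2 F G H P - H)"

lemma k_nonzero_at: "j \<in> {1..4} \<Longrightarrow> k j \<noteq> 0"
  using k_nonzero by blast

lemma Delta_eq_acoustic_det: "Delta c0 rho0 k l m = c0 * rho0 * acoustic_det"
  using k_nonzero_at[of 3] k_nonzero_at[of 4]
  unfolding Delta_def acoustic_det_def acoustic_weight_def by (simp add: field_simps)

lemma c0_rho0_nonzero: "c0 \<noteq> 0" "rho0 \<noteq> 0" and acoustic_det_nonzero: "acoustic_det \<noteq> 0"
  using Delta_nonzero unfolding Delta_eq_acoustic_det by simp_all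

lemma vortex_free_modes:
  "vortex_free (mode_vx V) (mode_vy V) (mode_vz V) = acoustic_weight 1 * V 1 + acoustic_weight 2 * V 2"
  using k_nonzero_at[of 3] k_nonzero_at[of 4]
  unfolding vortex_free_def mode_vx_def mode_vy_def mode_vz_def acoustic_weight_def
  by (simp add: field_simps)

lemma acoustic_amps_scaled:
  "acoustic_det * acoustic_amp1 F G H P = r 2 * vortex_free F G H - acoustic_weight 2 * (P / (c0 * rho0))"
  "acoustic_det * acoustic_amp2 F G H P = r 1 * vortex_free F G H + acoustic_weight 1 * (P / (c0 * rho0))"
  using acoustic_det_nonzero unfolding acoustic_amp1_def acoustic_amp2_def by simp_all

lemma amplitude_modes:
  assumes "j \<in> {1..4}"
  shows "amplitude j (mode_vx V) (mode_vy V) (mode_vz V) (mode_p V) = V j"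
proof -
  have p: "mode_p V / (c0 * rho0) = r 2 * V 2 - r 1 * V 1"
    using c0_rho0_nonzero unfolding mode_p_def by (simp add: field_simps)
  have "acoustic_det * acoustic_amp1 (mode_vx V) (mode_vy V) (mode_vz V) (mode_p V) = acoustic_det * V 1"
    "acoustic_det * acoustic_amp2 (mode_vx V) (mode_vy V) (mode_vz V) (mode_p V) = acoustic_det * V 2"
    unfolding acoustic_amps_scaled vortex_free_modes p by (simp_all add: acoustic_det_def algebra_simps)
  then have "acoustic_amp1 (mode_vx V) (mode_vy V) (mode_vz V) (mode_p V) = V 1"
    "acoustic_amp2 (mode_vx V) (mode_vy V) (mode_vz V) (mode_p V) = V 2"
    using acoustic_det_nonzero by simp_all
  moreover from assms have "j = 1 \<or> j = 2 \<or> j = 3 \<or> j = 4"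
    by auto
  ultimately show ?thesis
    unfolding amplitude_def mode_vy_def mode_vz_def by auto
qed

lemma modes_amplitude:
  "mode_vx (\<lambda>j. amplitude j F G H P) = F" "mode_vy (\<lambda>j. amplitude j F G H P) = G"
  "mode_vz (\<lambda>j. amplitude j F G H P) = H" "mode_p (\<lambda>j. amplitude j F G H P) = P"
proof -
  define A1 A2 where "A1 = acoustic_amp1 F G H P" and "A2 = acoustic_amp2 F G H P"
  have "acoustic_det * (acoustic_weight 1 * A1 + acoustic_weight 2 * A2) = acoustic_det * vortex_free F G H"
    "acoustic_det * (- r 1 * A1 + r 2 * A2) = acoustic_det * (P / (c0 * rho0))"
    unfolding distrib_left mult.left_commute[of acoustic_det] A1_def A2_def acoustic_amps_scaled
    by (simp_all add: acoustic_det_def algebra_simps)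
  then have acoustic: "acoustic_weight 1 * A1 + acoustic_weight 2 * A2 = vortex_free F G H"
    "- r 1 * A1 + r 2 * A2 = P / (c0 * rho0)"
    using acoustic_det_nonzero by (metis mult_left_cancel)+
  have amps: "amplitude 1 F G H P = A1" "amplitude 2 F G H P = A2"
    "amplitude 3 F G H P = l 1 * A1 + l 2 * A2 - G" "amplitude 4 F G H P = m 1 * A1 + m 2 * A2 - H"
    unfolding amplitude_def A1_def A2_def by simp_all
  have "mode_vx (\<lambda>j. amplitude j F G H P)
      = acoustic_weight 1 * A1 + acoustic_weight 2 * A2 - l 3 / k 3 * G - m 4 / k 4 * H"
    unfolding mode_vx_def amps acoustic_weight_def by (simp add: algebra_simps)
  then show "mode_vx (\<lambda>j. amplitude j F G H P) = F"
    unfolding acoustic vortex_free_def by simp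
  show "mode_vy (\<lambda>j. amplitude j F G H P) = G" "mode_vz (\<lambda>j. amplitude j F G H P) = H"
    unfolding mode_vy_def mode_vz_def amps by simp_all
  have "mode_p (\<lambda>j. amplitude j F G H P) = c0 * rho0 * (- r 1 * A1 + r 2 * A2)"
    unfolding mode_p_def amps by (simp add: algebra_simps)
  then show "mode_p (\<lambda>j. amplitude j F G H P) = P"
    unfolding acoustic using c0_rho0_nonzero by simp
qed

lemma amplitude_lincomb:
  "amplitude j F G H P = amplitude j 1 0 0 0 * F + amplitude j 0 1 0 0 * G
     + amplitude j 0 0 1 0 * H + amplitude j 0 0 0 1 * P"
  using c0_rho0_nonzero acoustic_det_nonzero k_nonzero_at[of 3] k_nonzero_at[of 4]
  unfolding amplitude_def acoustic_amp1_def acoustic_amp2_def vortex_free_def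
  by (simp add: field_simps)

lemma C1_pderivs_amplitude:
  assumes "C1_pderivs T F Fx Fy Fz Ft" and "C1_pderivs T G Gx Gy Gz Gt"
    and "C1_pderivs T H Hx Hy Hz Ht" and "C1_pderivs T P Px Py Pz Pt"
  shows "C1_pderivs T (\<lambda>x y z t. amplitude j (F x y z t) (G x y z t) (H x y z t) (P x y z t))
    (\<lambda>x y z t. amplitude j (Fx x y z t) (Gx x y z t) (Hx x y z t) (Px x y z t))
    (\<lambda>x y z t. amplitude j (Fy x y z t) (Gy x y z t) (Hy x y z t) (Py x y z t))
    (\<lambda>x y z t. amplitude j (Fz x y z t) (Gz x y z t) (Hz x y z t) (Pz x y z t))
    (\<lambda>x y z t. amplitude j (Ft x y z t) (Gt x y z t) (Ht x y z t) (Pt x y z t))"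
proof -
  have lincomb: "(\<lambda>x y z t. amplitude j (A x y z t) (B x y z t) (C x y z t) (E x y z t))
    = (\<lambda>x y z t. amplitude j 1 0 0 0 * A x y z t + amplitude j 0 1 0 0 * B x y z t
        + amplitude j 0 0 1 0 * C x y z t + amplitude j 0 0 0 1 * E x y z t)" for A B C E :: stfld
    by (intro ext) (rule amplitude_lincomb)
  show ?thesis
    unfolding lincomb[of F G H P] lincomb[of Fx Gx Hx Px] lincomb[of Fy Gy Hy Py] lincomb[of Fz Gz Hz Pz]
      lincomb[of Ft Gt Ht Pt]
    by (intro C1_pderivs_add C1_pderivs_cmult assms)
qed

lemma modes_cong:
  assumes "\<forall>j\<in>{1..4}. V j = V' j"
  shows "mode_vx V = mode_vx V'" "mode_vy V = mode_vy V'" "mode_vz V = mode_vz V'" "mode_p V = mode_p V'"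
  using assms unfolding mode_vx_def mode_vy_def mode_vz_def mode_p_def by auto

lemma plane_waves_solve_euler:
  fixes D :: "nat \<Rightarrow> real"
  shows "mode_vx (\<lambda>j. - (speed j * k j) * D j) + U0 * mode_vx (\<lambda>j. k j * D j)
      + 1 / rho0 * mode_p (\<lambda>j. k j * D j) = 0"
    and "mode_vy (\<lambda>j. - (speed j * k j) * D j) + U0 * mode_vy (\<lambda>j. k j * D j)
      + 1 / rho0 * mode_p (\<lambda>j. l j * D j) = 0"
    and "mode_vz (\<lambda>j. - (speed j * k j) * D j) + U0 * mode_vz (\<lambda>j. k j * D j)
      + 1 / rho0 * mode_p (\<lambda>j. m j * D j) = 0"
    and "mode_p (\<lambda>j. - (speed j * k j) * D j) + U0 * mode_p (\<lambda>j. k j * D j)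
      + rho0 * c0\<^sup>2 * (mode_vx (\<lambda>j. k j * D j) + mode_vy (\<lambda>j. l j * D j) + mode_vz (\<lambda>j. m j * D j)) = 0"
proof -
  have r_sq: "r i * r i = (k i)\<^sup>2 + (l i)\<^sup>2 + (m i)\<^sup>2" for i
    unfolding rr_def by (simp add: sum_squares_ge_zero)
  have "mode_vx (\<lambda>j. k j * D j) + mode_vy (\<lambda>j. l j * D j) + mode_vz (\<lambda>j. m j * D j)
      = r 1 * r 1 * D 1 + r 2 * r 2 * D 2"
    using k_nonzero_at[of 3] k_nonzero_at[of 4] unfolding r_sq mode_vx_def mode_vy_def mode_vz_def
    by (simp add: field_simps power2_eq_square)
  then show "mode_p (\<lambda>j. - (speed j * k j) * D j) + U0 * mode_p (\<lambda>j. k j * D j)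
      + rho0 * c0\<^sup>2 * (mode_vx (\<lambda>j. k j * D j) + mode_vy (\<lambda>j. l j * D j) + mode_vz (\<lambda>j. m j * D j)) = 0"
    using k_nonzero_at[of 1] k_nonzero_at[of 2] c0_rho0_nonzero unfolding mode_p_def speed_def
    by (simp add: field_simps power2_eq_square)
qed (use k_nonzero_at[of 1] k_nonzero_at[of 2] k_nonzero_at[of 3] k_nonzero_at[of 4] c0_rho0_nonzero in
      \<open>simp_all add: mode_vx_def mode_vy_def mode_vz_def mode_p_def speed_def field_simps\<close>)

lemma euler_modes_decouple:
  assumes planar: "\<forall>j\<in>{1..4}. \<exists>d. X j = k j * d \<and> Y j = l j * d \<and> Z j = m j * d"
    and vx: "mode_vx T + U0 * mode_vx X + 1 / rho0 * mode_p X = 0"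
    and vy: "mode_vy T + U0 * mode_vy X + 1 / rho0 * mode_p Y = 0"
    and vz: "mode_vz T + U0 * mode_vz X + 1 / rho0 * mode_p Z = 0"
    and p: "mode_p T + U0 * mode_p X + rho0 * c0\<^sup>2 * (mode_vx X + mode_vy Y + mode_vz Z) = 0"
    and j: "j \<in> {1..4}"
  shows "T j = - speed j * X j"
proof -
  define D where "D j = X j / k j" for j
  from planar have "\<forall>j\<in>{1..4}. X j = k j * D j" "\<forall>j\<in>{1..4}. Y j = l j * D j"
    "\<forall>j\<in>{1..4}. Z j = m j * D j"
    by (auto simp: D_def k_nonzero_at)
  note XYZ = modes_cong[OF this(1)] modes_cong[OF this(2)] modes_cong[OF this(3)]
  define T' where "T' j = - (speed j * k j) * D j" for j
  have "mode_vx T = mode_vx T'" "mode_vy T = mode_vy T'" "mode_vz T = mode_vz T'" "mode_p T = mode_p T'"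
    using vx vy vz p plane_waves_solve_euler[of D] unfolding XYZ T'_def by simp_all
  then have "T j = T' j"
    using amplitude_modes[OF j, of T] amplitude_modes[OF j, of T'] by simp
  then show ?thesis
    using j by (simp add: T'_def D_def k_nonzero_at)
qed

section \<open>Solutions in Z_1\<close>

definition superpose :: "(nat \<Rightarrow> fld) \<Rightarrow> state" where
  "superpose A = ((\<lambda>x y z. mode_vx (\<lambda>j. A j x y z)), (\<lambda>x y z. mode_vy (\<lambda>j. A j x y z)),
     (\<lambda>x y z. mode_vz (\<lambda>j. A j x y z)), (\<lambda>x y z. mode_p (\<lambda>j. A j x y z)))"

definition amplitude_field :: "nat \<Rightarrow> state \<Rightarrow> fld" where
  "amplitude_field j I x y z =
     amplitude j (fst I x y z) (fst (snd I) x y z) (fst (snd (snd I)) x y z) (snd (snd (snd I)) x y z)"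

definition evolve :: "state \<Rightarrow> real \<Rightarrow> state" where
  "evolve I t = superpose (\<lambda>j x y z. amplitude_field j I (x - speed j * t) y z)"

lemma superpose_amplitude_field: "superpose (\<lambda>j. amplitude_field j I) = I"
  by (cases I) (simp add: superpose_def amplitude_field_def modes_amplitude)

lemma amplitude_field_superpose: "j \<in> {1..4} \<Longrightarrow> amplitude_field j (superpose A) = A j"
  by (simp add: fun_eq_iff superpose_def amplitude_field_def amplitude_modes)

lemma superpose_cong: "(\<And>j. j \<in> {1..4} \<Longrightarrow> A j = B j) \<Longrightarrow> superpose A = superpose B"
  unfolding superpose_def mode_vx_def mode_vy_def mode_vz_def mode_p_def by simp

lemma If_eq_superpose: "If c0 rho0 k l m f = superpose (\<lambda>j x y z. f j (k j * x + l j * y + m j * z))"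
  by (simp add: If_def superpose_def mode_vx_def mode_vy_def mode_vz_def mode_p_def)

lemma amplitude_field_Z1_plane_wave:
  assumes "I \<in> Z1 c0 rho0 k l m" and "j \<in> {1..4}"
  obtains g where "C1_fun g" and "\<And>x y z. amplitude_field j I x y z = g (k j * x + l j * y + m j * z)"
proof -
  obtain f where "I = If c0 rho0 k l m f" and "\<forall>i\<in>{1..4}. C1_fun (f i)"
    using assms(1) unfolding Z1_def by blast
  with assms(2) show ?thesis
    using that[of "f j"] by (simp add: If_eq_superpose amplitude_field_superpose)
qed

lemma evolve_null: "evolve null_state t = null_state"
proof -
  have "amplitude_field j null_state = (\<lambda>x y z. 0)" for j
    by (simp add: fun_eq_iff amplitude_field_def null_state_def amplitude_lincomb[of j 0 0 0 0])
  then show ?thesis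
    by (simp add: evolve_def superpose_def null_state_def mode_vx_def mode_vy_def mode_vz_def mode_p_def)
qed

lemma Z1_solution_exists:
  assumes "I \<in> Z1 c0 rho0 k l m"
  shows "\<exists>u. Z1_solution U0 c0 rho0 k l m t0 I u"
proof -
  obtain f where I: "I = If c0 rho0 k l m f" and f: "\<forall>i\<in>{1..4}. C1_fun (f i)"
    using assms unfolding Z1_def by blast
  then obtain f' where f': "\<And>i s. i \<in> {1..4} \<Longrightarrow> (f i has_real_derivative f' i s) (at s)"
    and f'_cont: "\<And>i. i \<in> {1..4} \<Longrightarrow> continuous_on UNIV (f' i)"
    unfolding C1_fun_def by metis
  define V where "V j x y z t = f j (k j * x + l j * y + m j * z - speed j * k j * t)" for j x y z t
  define D where "D j x y z t = f' j (k j * x + l j * y + m j * z - speed j * k j * t)" for j x y z t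
  have C1_V: "C1_pderivs t0 (V j) (\<lambda>x y z t. k j * D j x y z t) (\<lambda>x y z t. l j * D j x y z t)
      (\<lambda>x y z t. m j * D j x y z t) (\<lambda>x y z t. - (speed j * k j) * D j x y z t)" if "j \<in> {1..4}" for j
    unfolding V_def D_def by (rule C1_pderivs_plane_wave) (use that f' f'_cont in auto)
  have C1_modes: "C1_pderivs t0 (\<lambda>x y z t. M (\<lambda>j. V j x y z t)) (\<lambda>x y z t. M (\<lambda>j. k j * D j x y z t))
      (\<lambda>x y z t. M (\<lambda>j. l j * D j x y z t)) (\<lambda>x y z t. M (\<lambda>j. m j * D j x y z t))
      (\<lambda>x y z t. M (\<lambda>j. - (speed j * k j) * D j x y z t))"
    if "M \<in> {mode_vx, mode_vy, mode_vz, mode_p}" for M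
    using that unfolding insert_iff empty_iff
    by (elim disjE; simp only: mode_vx_def mode_vy_def mode_vz_def mode_p_def;
        intro C1_pderivs_add C1_pderivs_diff C1_pderivs_cmult C1_V; simp)
  define u :: sol where "u = ((\<lambda>x y z t. mode_vx (\<lambda>j. V j x y z t)), (\<lambda>x y z t. mode_vy (\<lambda>j. V j x y z t)),
    (\<lambda>x y z t. mode_vz (\<lambda>j. V j x y z t)), (\<lambda>x y z t. mode_p (\<lambda>j. V j x y z t)))"
  have slice_u: "slice u t = If c0 rho0 k l m (\<lambda>j s. f j (s - speed j * k j * t))" for t
    unfolding If_eq_superpose by (simp add: slice_def u_def superpose_def V_def)
  have "is_solution U0 c0 rho0 t0 I u"
    unfolding is_solution_def u_def prod.case
    \<comment> \<open>the sixteen derivative witnesses are fixed by unification with C1_modes\<close>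
    by (rule exI conjI allI impI C1_modes[of mode_vx] C1_modes[of mode_vy] C1_modes[of mode_vz]
        C1_modes[of mode_p] insertI1 insertI2 plane_waves_solve_euler)+
      (simp add: slice_u[unfolded u_def] I)
  moreover have "\<forall>t\<in>{0..t0}. slice u t \<in> Z1 c0 rho0 k l m"
    unfolding slice_u Z1_def using f C1_fun_shift by blast
  ultimately show ?thesis
    unfolding Z1_solution_def by blast
qed

lemma Z1_solution_amplitude_transport:
  assumes sol: "Z1_solution U0 c0 rho0 k l m t0 I u" and t: "t \<in> {0..t0}" and j: "j \<in> {1..4}"
  shows "amplitude_field j (slice u t) x y z = amplitude_field j I (x - speed j * t) y z"
proof -
  obtain vx vy vz p where u: "u = (vx, vy, vz, p)"
    by (cases u)
  from sol obtain vxx vxy vxz vxt vyx vyy vyz vyt vzx vzy vzz vzt px py pz pt where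
    C1: "C1_pderivs t0 vx vxx vxy vxz vxt" "C1_pderivs t0 vy vyx vyy vyz vyt"
      "C1_pderivs t0 vz vzx vzy vzz vzt" "C1_pderivs t0 p px py pz pt"
    and euler: "\<And>x y z t. t \<in> {0..t0} \<Longrightarrow>
        vxt x y z t + U0 * vxx x y z t + 1 / rho0 * px x y z t = 0 \<and>
        vyt x y z t + U0 * vyx x y z t + 1 / rho0 * py x y z t = 0 \<and>
        vzt x y z t + U0 * vzx x y z t + 1 / rho0 * pz x y z t = 0 \<and>
        pt x y z t + U0 * px x y z t + rho0 * c0\<^sup>2 * (vxx x y z t + vyy x y z t + vzz x y z t) = 0"
    and init: "slice u 0 = I" and in_Z1: "\<And>t. t \<in> {0..t0} \<Longrightarrow> slice u t \<in> Z1 c0 rho0 k l m"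
    unfolding Z1_solution_def is_solution_def u prod.case by (elim conjE exE) blast
  define w where "w i F G H P = (\<lambda>x y z t. amplitude i (F x y z t) (G x y z t) (H x y z t) (P x y z t))"
    for i and F G H P :: stfld
  have recover: "mode_vx (\<lambda>i. w i F G H P x y z t) = F x y z t" "mode_vy (\<lambda>i. w i F G H P x y z t) = G x y z t"
    "mode_vz (\<lambda>i. w i F G H P x y z t) = H x y z t" "mode_p (\<lambda>i. w i F G H P x y z t) = P x y z t"
    for F G H P x y z t
    by (simp_all add: w_def modes_amplitude)
  have w_slice: "amplitude_field i (slice u s) x y z = w i vx vy vz p x y z s" for i s x y z
    by (simp add: amplitude_field_def slice_def u w_def)
  have C1_w: "C1_pderivs t0 (w i vx vy vz p) (w i vxx vyx vzx px) (w i vxy vyy vzy py)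
      (w i vxz vyz vzz pz) (w i vxt vyt vzt pt)" for i
    unfolding w_def by (rule C1_pderivs_amplitude[OF C1])
  have planar: "\<exists>d. w i vxx vyx vzx px x y z s = k i * d \<and> w i vxy vyy vzy py x y z s = l i * d
      \<and> w i vxz vyz vzz pz x y z s = m i * d" if s: "s \<in> {0..t0}" and i: "i \<in> {1..4}" for i x y z s
  proof -
    obtain g where "C1_fun g" and plane_wave: "\<And>x' y' z'. w i vx vy vz p x' y' z' s = g (k i * x' + l i * y' + m i * z')"
      using amplitude_field_Z1_plane_wave[OF in_Z1[OF s] i] unfolding w_slice by blast
    then obtain g' where g': "\<And>\<sigma>. (g has_real_derivative g' \<sigma>) (at \<sigma>)"
      unfolding C1_fun_def by blast
    have "((\<lambda>\<sigma>. g (k i * \<sigma> + l i * y + m i * z)) has_real_derivative w i vxx vyx vzx px x y z s) (at x)"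
      "((\<lambda>\<sigma>. g (k i * x + l i * \<sigma> + m i * z)) has_real_derivative w i vxy vyy vzy py x y z s) (at y)"
      "((\<lambda>\<sigma>. g (k i * x + l i * y + m i * \<sigma>)) has_real_derivative w i vxz vyz vzz pz x y z s) (at z)"
      using C1_pderivsD[OF C1_w[of i] s] unfolding plane_wave by blast+
    from plane_wave_pderivs[OF g' this] show ?thesis
      by (intro exI[of _ "g' (k i * x + l i * y + m i * z)"]) (simp add: mult.commute)
  qed
  have transport: "w j vxt vyt vzt pt x y z s = - speed j * w j vxx vyx vzx px x y z s"
    if s: "s \<in> {0..t0}" for x y z s
    by (rule euler_modes_decouple[where X = "\<lambda>i. w i vxx vyx vzx px x y z s"
          and Y = "\<lambda>i. w i vxy vyy vzy py x y z s" and Z = "\<lambda>i. w i vxz vyz vzz pz x y z s"])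
      (use planar[OF s] euler[OF s, of x y z] j in \<open>simp_all add: recover\<close>)
  have "w j vx vy vz p x y z t = w j vx vy vz p (x - speed j * t) y z 0"
    using C1_pderivs_transport_shift[OF C1_w transport t] .
  then show ?thesis
    unfolding w_slice[symmetric] init .
qed

lemma Z1_solution_slice_eq_evolve:
  assumes "Z1_solution U0 c0 rho0 k l m t0 I u" and "t \<in> {0..t0}"
  shows "slice u t = evolve I t"
proof -
  have "superpose (\<lambda>j. amplitude_field j (slice u t))
      = superpose (\<lambda>j x y z. amplitude_field j I (x - speed j * t) y z)"
    using Z1_solution_amplitude_transport[OF assms] by (intro superpose_cong ext) simp
  then show ?thesis
    unfolding superpose_amplitude_field evolve_def .
qed

lemma amplitude_diff_le:
  assumes "\<bar>F - F'\<bar> \<le> e" "\<bar>G - G'\<bar> \<le> e" "\<bar>H - H'\<bar> \<le> e" "\<bar>P - P'\<bar> \<le> e"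
  shows "\<bar>amplitude j F G H P - amplitude j F' G' H' P'\<bar> \<le> (\<bar>amplitude j 1 0 0 0\<bar> + \<bar>amplitude j 0 1 0 0\<bar>
    + \<bar>amplitude j 0 0 1 0\<bar> + \<bar>amplitude j 0 0 0 1\<bar>) * e"
  unfolding amplitude_lincomb[of j F G H P] amplitude_lincomb[of j F' G' H' P']
  by (rule abs_lincomb4_diff_le[OF assms order_refl])

lemma amplitude_field_uniformly_close:
  obtains C where "C \<ge> 0" and "\<And>e I1 I2 j x y z. uniformly_close e I1 I2 \<Longrightarrow> j \<in> {1..4::nat} \<Longrightarrow>
    \<bar>amplitude_field j I1 x y z - amplitude_field j I2 x y z\<bar> \<le> C * e"
proof
  define C where "C = (\<Sum>j\<in>{1..4::nat}. \<bar>amplitude j 1 0 0 0\<bar> + \<bar>amplitude j 0 1 0 0\<bar>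
    + \<bar>amplitude j 0 0 1 0\<bar> + \<bar>amplitude j 0 0 0 1\<bar>)"
  show "C \<ge> 0"
    unfolding C_def by (intro sum_nonneg) simp
  fix e :: real and I1 I2 :: state and j :: nat and x y z :: real
  assume close: "uniformly_close e I1 I2" and j: "j \<in> {1..4}"
  then have "e \<ge> 0"
    unfolding uniformly_close_def by (meson abs_ge_zero order_trans)
  have "\<bar>amplitude j 1 0 0 0\<bar> + \<bar>amplitude j 0 1 0 0\<bar> + \<bar>amplitude j 0 0 1 0\<bar> + \<bar>amplitude j 0 0 0 1\<bar> \<le> C"
    unfolding C_def by (rule member_le_sum) (use j in auto)
  with \<open>e \<ge> 0\<close> close show "\<bar>amplitude_field j I1 x y z - amplitude_field j I2 x y z\<bar> \<le> C * e"
    unfolding amplitude_field_def uniformly_close_def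
    by (meson amplitude_diff_le mult_right_mono order_trans)
qed

lemma superpose_uniformly_close:
  obtains C where "C \<ge> 0" and "\<And>e A B. (\<And>j x y z. j \<in> {1..4::nat} \<Longrightarrow> \<bar>A j x y z - B j x y z\<bar> \<le> e) \<Longrightarrow>
    uniformly_close (C * e) (superpose A) (superpose B)"
proof
  define Cx Cy Cz Cp where "Cx = \<bar>k 1\<bar> + \<bar>k 2\<bar> + \<bar>l 3 / k 3\<bar> + \<bar>m 4 / k 4\<bar>"
    and "Cy = \<bar>l 1\<bar> + \<bar>l 2\<bar> + \<bar>-1\<bar> + \<bar>0\<bar>" and "Cz = \<bar>m 1\<bar> + \<bar>m 2\<bar> + \<bar>0\<bar> + \<bar>-1\<bar>"
    and "Cp = \<bar>- c0 * rho0 * r 1\<bar> + \<bar>c0 * rho0 * r 2\<bar> + \<bar>0\<bar> + \<bar>0\<bar>"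
  have nonneg: "Cx \<ge> 0" "Cy \<ge> 0" "Cz \<ge> 0" "Cp \<ge> 0"
    unfolding Cx_def Cy_def Cz_def Cp_def by simp_all
  then show "Cx + Cy + Cz + Cp \<ge> 0"
    by simp
  fix e :: real and A B :: "nat \<Rightarrow> fld"
  assume "\<And>j x y z. j \<in> {1..4} \<Longrightarrow> \<bar>A j x y z - B j x y z\<bar> \<le> e"
  then have diffs: "\<bar>A 1 x y z - B 1 x y z\<bar> \<le> e" "\<bar>A 2 x y z - B 2 x y z\<bar> \<le> e"
    "\<bar>A 3 x y z - B 3 x y z\<bar> \<le> e" "\<bar>A 4 x y z - B 4 x y z\<bar> \<le> e" for x y z
    by simp_all
  have lincomb: "mode_vx V = k 1 * V 1 + k 2 * V 2 + l 3 / k 3 * V 3 + m 4 / k 4 * V 4"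
    "mode_vy V = l 1 * V 1 + l 2 * V 2 + (-1) * V 3 + 0 * V 4"
    "mode_vz V = m 1 * V 1 + m 2 * V 2 + 0 * V 3 + (-1) * V 4"
    "mode_p V = - c0 * rho0 * r 1 * V 1 + c0 * rho0 * r 2 * V 2 + 0 * V 3 + 0 * V 4" for V
    unfolding mode_vx_def mode_vy_def mode_vz_def mode_p_def by simp_all
  have "Cx \<le> Cx + Cy + Cz + Cp" "Cy \<le> Cx + Cy + Cz + Cp" "Cz \<le> Cx + Cy + Cz + Cp" "Cp \<le> Cx + Cy + Cz + Cp"
    using nonneg by linarith+
  note bounds = this[unfolded Cx_def Cy_def Cz_def Cp_def]
  show "uniformly_close ((Cx + Cy + Cz + Cp) * e) (superpose A) (superpose B)"
    unfolding uniformly_close_def superpose_def fst_conv snd_conv lincomb Cx_def Cy_def Cz_def Cp_def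
    by (intro allI conjI abs_lincomb4_diff_le diffs bounds)
qed

lemma evolve_uniformly_continuous:
  assumes "\<epsilon> > 0"
  shows "\<exists>\<delta>>0. \<forall>I1 I2 t. uniformly_close \<delta> I1 I2 \<longrightarrow> uniformly_close \<epsilon> (evolve I1 t) (evolve I2 t)"
proof -
  obtain Ca where "Ca \<ge> 0" and amplitude_close: "\<And>e I1 I2 j x y z. uniformly_close e I1 I2 \<Longrightarrow>
      j \<in> {1..4} \<Longrightarrow> \<bar>amplitude_field j I1 x y z - amplitude_field j I2 x y z\<bar> \<le> Ca * e"
    by (rule amplitude_field_uniformly_close) blast
  obtain Cs where "Cs \<ge> 0" and superpose_close: "\<And>e A B. (\<And>j x y z. j \<in> {1..4} \<Longrightarrow>
      \<bar>A j x y z - B j x y z\<bar> \<le> e) \<Longrightarrow> uniformly_close (Cs * e) (superpose A) (superpose B)"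
    by (rule superpose_uniformly_close) blast
  define \<delta> where "\<delta> = \<epsilon> / (Cs * Ca + 1)"
  have pos: "Cs * Ca + 1 > 0"
    using mult_nonneg_nonneg[OF \<open>Cs \<ge> 0\<close> \<open>Ca \<ge> 0\<close>] by linarith
  with assms have "\<delta> > 0"
    by (simp add: \<delta>_def)
  have "Cs * (Ca * \<delta>) = Cs * Ca * \<epsilon> / (Cs * Ca + 1)"
    by (simp add: \<delta>_def)
  also have "\<dots> \<le> \<epsilon>"
    using pos assms by (simp add: pos_divide_le_eq algebra_simps)
  finally have bound: "Cs * (Ca * \<delta>) \<le> \<epsilon>" .
  have "uniformly_close \<epsilon> (evolve I1 t) (evolve I2 t)" if "uniformly_close \<delta> I1 I2" for I1 I2 t
  proof (rule uniformly_close_mono[OF _ bound])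
    show "uniformly_close (Cs * (Ca * \<delta>)) (evolve I1 t) (evolve I2 t)"
      unfolding evolve_def using amplitude_close[OF that] by (intro superpose_close)
  qed
  with \<open>\<delta> > 0\<close> show ?thesis
    by blast
qed

lemma conv_Z1_evolve:
  assumes "conv_Z1 Is I"
  shows "conv_Z1 (\<lambda>n. evolve (Is n) t) (evolve I t)"
  unfolding conv_Z1_iff_uniformly_close
proof (intro allI impI)
  fix \<epsilon> :: real
  assume "\<epsilon> > 0"
  then obtain \<delta> where "\<delta> > 0"
    and close: "\<forall>I1 I2 t. uniformly_close \<delta> I1 I2 \<longrightarrow> uniformly_close \<epsilon> (evolve I1 t) (evolve I2 t)"
    using evolve_uniformly_continuous by blast
  have "eventually (\<lambda>n. uniformly_close \<delta> (Is n) I) sequentially"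
    using assms \<open>\<delta> > 0\<close> unfolding conv_Z1_iff_uniformly_close by simp
  then show "eventually (\<lambda>n. uniformly_close \<epsilon> (evolve (Is n) t) (evolve I t)) sequentially"
    by (rule eventually_mono) (use close in blast)
qed

lemma well_posed_Z1: "well_posed U0 c0 rho0 k l m t0"
  unfolding well_posed_def
proof (intro conjI ballI allI impI)
  fix I
  assume "I \<in> Z1 c0 rho0 k l m"
  then show "\<exists>u. Z1_solution U0 c0 rho0 k l m t0 I u"
    by (rule Z1_solution_exists)
next
  fix I u v t
  assume "Z1_solution U0 c0 rho0 k l m t0 I u" "Z1_solution U0 c0 rho0 k l m t0 I v" "t \<in> {0..t0}"
  then show "slice u t = slice v t"
    using Z1_solution_slice_eq_evolve by metis
next
  fix I Is u us t
  assume "conv_Z1 Is I" and sol: "Z1_solution U0 c0 rho0 k l m t0 I u"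
    and sols: "\<forall>n. Z1_solution U0 c0 rho0 k l m t0 (Is n) (us n)" and t: "t \<in> {0..t0}"
  have "(\<lambda>n. slice (us n) t) = (\<lambda>n. evolve (Is n) t)"
    using Z1_solution_slice_eq_evolve[OF sols[rule_format] t] by simp
  with conv_Z1_evolve[OF \<open>conv_Z1 Is I\<close>] show "conv_Z1 (\<lambda>n. slice (us n) t) (slice u t)"
    unfolding Z1_solution_slice_eq_evolve[OF sol t] by simp
qed

lemma null_solution_stable:
  assumes "\<epsilon> > 0"
  shows "\<exists>\<eta>>0. \<forall>I \<in> Veps c0 rho0 k l m \<eta>. \<forall>t0>0. \<forall>u. Z1_solution U0 c0 rho0 k l m t0 I u \<longrightarrow>
    (\<forall>t\<in>{0..t0}. slice u t \<in> Veps c0 rho0 k l m \<epsilon>)"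
proof -
  obtain \<eta> where "\<eta> > 0"
    and evolve_close: "\<forall>I1 I2 t. uniformly_close \<eta> I1 I2 \<longrightarrow> uniformly_close (\<epsilon> / 2) (evolve I1 t) (evolve I2 t)"
    using evolve_uniformly_continuous[of "\<epsilon> / 2"] assms by auto
  have "slice u t \<in> Veps c0 rho0 k l m \<epsilon>"
    if "I \<in> Veps c0 rho0 k l m \<eta>" and sol: "Z1_solution U0 c0 rho0 k l m t0 I u" and t: "t \<in> {0..t0}"
    for I t0 u t
  proof (rule uniformly_close_null_imp_Veps)
    show "slice u t \<in> Z1 c0 rho0 k l m"
      using sol t unfolding Z1_solution_def by blast
    show "uniformly_close (\<epsilon> / 2) (slice u t) null_state"
      using evolve_close Veps_imp_uniformly_close_null[OF that(1)]
      unfolding Z1_solution_slice_eq_evolve[OF sol t] by (metis evolve_null)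
  qed (use assms in simp)
  with \<open>\<eta> > 0\<close> show ?thesis
    by blast
qed

end

theorem proposition12:
  fixes U0 c0 rho0 :: real and k l m :: "nat \<Rightarrow> real"
  assumes "U0 > 0" and "c0 > 0" and "rho0 > 0"
    and "\<forall>i\<in>{1..4::nat}. k i \<noteq> 0"
    and "Delta c0 rho0 k l m \<noteq> 0"
  shows "(\<forall>t0>0. well_posed U0 c0 rho0 k l m t0) \<and> lyapunov_stable U0 c0 rho0 k l m"
proof -
  interpret linearized_euler U0 c0 rho0 k l m
    using assms(4,5) by unfold_locales
  show ?thesis
    unfolding lyapunov_stable_def using well_posed_Z1 null_solution_stable by blast
qed

end
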